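(* In the IM-OCP setting described in the context, assume $p_t\ge p_{\min}>0$ for all $t$, with $p_{\min}$ independent of $T$, and let $c>0$ and $\beta\in(0,1)$ be constants independent of $T$. Use either the fixed step size $\eta_t=cT^{-\beta}$ for $t=1,\dots,T$ (horizon $T$), or the decaying step size $\eta_t=ct^{-\beta}$. Then there is a constant $A$ independent of $T$ such that $$\left|\mathbb{E}\left[\frac{1}{T}\sum_{t=1}^TE_t\right]-\alpha\right|\le A\,T^{-(1-\beta)},$$ and the expected regret satisfies $\overline{\mathrm{Reg}}(T)=\mathcal{O}\big(T^{\max\{\beta,1-\beta\}}\big)$. In particular $\beta=1/2$ gives miscoverage $\mathcal{O}(T^{-1/2})$ and regret $\mathcal{O}(\sqrt{T})$.
   Context: Fix $\alpha\in(0,1)$ and $B>0$. Let $(r_t^* )_{t\ge1}$ be an arbitrary deterministic sequence of scores with $r_t^*\in[0,B]$. Given thresholds $r_t$, the miscoverage indicator is $E_t=\mathbb{1}\{r_t^*>r_t\}$. The quantile loss is $\ell_{1-\alpha}(r,r^* )=(\alpha-\mathbb{1}\{r<r^*\})(r-r^* )$. Let $P$ be a probability distribution on $[0,B]$ with bounded density, $\sigma>0$, and $R(r)=\mathbb{E}_{r^*\sim P}[\ell_{1-\alpha}(r,r^* )]+\frac{\sigma}{2}r^2$; $R$ is differentiable and $\nabla R$ is a continuous strictly increasing bijection of $\mathbb{R}$. Feedback: $p_t\in(0,1]$ and $(\mathrm{obs}_t)_{t\ge1}$ are independent Bernoulli random variables with $\Pr(\mathrm{obs}_t=1)=p_t$;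 expectations are over these. IM-OCP: given $r_1\in[0,B]$ and step sizes $\eta_t>0$, for $t\ge2$ the threshold $r_t$ is defined by $$\nabla R(r_t)=\nabla R(r_{t-1})-\eta_{t-1}(\alpha-E_{t-1})\frac{\mathrm{obs}_{t-1}}{p_{t-1}}.$$ The expected regret is $\overline{\mathrm{Reg}}(T)=\mathbb{E}\big[\sum_{i=1}^T\ell_{1-\alpha}(r_i,r_i^* )\mathrm{obs}_i/p_i\big]-\min_{u\in\mathbb{R}}\sum_{i=1}^T\ell_{1-\alpha}(u,r_i^* )$. *)

theory Defs
  imports "HOL-Probability.Probability"
begin

definition qloss :: "real \<Rightarrow> real \<Rightarrow> real \<Rightarrow> real" where
  "qloss \<alpha> r rs = (\<alpha> - (if r < rs then 1 else 0)) * (r - rs)"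

definition miscov :: "real \<Rightarrow> real \<Rightarrow> real" where
  "miscov r rs = (if rs > r then 1 else 0)"

definition Rfun :: "real measure \<Rightarrow> real \<Rightarrow> real \<Rightarrow> real \<Rightarrow> real" where
  "Rfun P \<alpha> \<sigma> r = (\<integral>x. qloss \<alpha> r x \<partial>P) + \<sigma> / 2 * r\<^sup>2"

text \<open>IM-OCP thresholds r_t (t \<ge> 1), with gradient map G = nabla R:
  G(r_{t+1}) = G(r_t) - eta_t (alpha - E_t) obs_t / p_t, i.e. r_{t+1} = G^{-1}(...).
  Index 0 is unused (set to r_1).\<close>
fun imocp :: "(real \<Rightarrow> real) \<Rightarrow> real \<Rightarrow> real \<Rightarrow> (nat \<Rightarrow> real) \<Rightarrow> (nat \<Rightarrow> real)
    \<Rightarrow> (nat \<Rightarrow> real) \<Rightarrow> (nat \<Rightarrow> bool) \<Rightarrow> nat \<Rightarrow> real" where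
  "imocp G \<alpha> r1 \<eta> p rs obs 0 = r1"
| "imocp G \<alpha> r1 \<eta> p rs obs (Suc 0) = r1"
| "imocp G \<alpha> r1 \<eta> p rs obs (Suc (Suc t)) =
     (let r = imocp G \<alpha> r1 \<eta> p rs obs (Suc t)
      in inv G (G r - \<eta> (Suc t) * (\<alpha> - miscov r (rs (Suc t)))
                   * (if obs (Suc t) then 1 else 0) / p (Suc t)))"

definition obs_pmf :: "(nat \<Rightarrow> real) \<Rightarrow> nat \<Rightarrow> (nat \<Rightarrow> bool) pmf" where
  "obs_pmf p T = Pi_pmf {1..T} False (\<lambda>t. bernoulli_pmf (p t))"

definition exp_miscov :: "(real \<Rightarrow> real) \<Rightarrow> real \<Rightarrow> real \<Rightarrow> (nat \<Rightarrow> real) \<Rightarrow> (nat \<Rightarrow> real)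
    \<Rightarrow> (nat \<Rightarrow> real) \<Rightarrow> nat \<Rightarrow> real" where
  "exp_miscov G \<alpha> r1 \<eta> p rs T =
     measure_pmf.expectation (obs_pmf p T)
       (\<lambda>obs. (1 / real T) * (\<Sum>t\<in>{1..T}. miscov (imocp G \<alpha> r1 \<eta> p rs obs t) (rs t)))"

definition exp_regret :: "(real \<Rightarrow> real) \<Rightarrow> real \<Rightarrow> real \<Rightarrow> (nat \<Rightarrow> real) \<Rightarrow> (nat \<Rightarrow> real)
    \<Rightarrow> (nat \<Rightarrow> real) \<Rightarrow> nat \<Rightarrow> real" where
  "exp_regret G \<alpha> r1 \<eta> p rs T =
     measure_pmf.expectation (obs_pmf p T)
       (\<lambda>obs. \<Sum>i\<in>{1..T}. qloss \<alpha> (imocp G \<alpha> r1 \<eta> p rs obs i) (rs i)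
                          * (if obs i then 1 else 0) / p i)
     - (INF u. \<Sum>i\<in>{1..T}. qloss \<alpha> u (rs i))"

end

theory Submission
  imports Defs
begin

text \<open>
  IM-OCP is mirror descent with mirror map \<open>R\<close>: writing \<open>G = \<nabla>R\<close>, which is strongly monotone and
  onto, and \<open>g\<^sub>t = (\<alpha> - E\<^sub>t) obs\<^sub>t / p\<^sub>t\<close>, the update reads \<open>G(r\<^sub>t\<^sub>+\<^sub>1) = G(r\<^sub>t) - \<eta>\<^sub>t g\<^sub>t\<close>.
  Above \<open>B\<close> every score is covered and below \<open>0\<close> none is, so \<open>G(r\<^sub>t)\<close> stays in a fixed band and
  \<open>r\<^sub>t\<close> stays bounded. As \<open>obs\<^sub>t\<close> is independent of \<open>r\<^sub>t\<close>, \<open>\<bbbE>[g\<^sub>t] = \<alpha> - \<bbbE>[E\<^sub>t]\<close>, so the coverage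
  error is \<open>\<bbbE>[\<Sum> g\<^sub>t] / T\<close>; summation by parts bounds \<open>\<Sum> g\<^sub>t = \<Sum> (G(r\<^sub>t) - G(r\<^sub>t\<^sub>+\<^sub>1)) / \<eta>\<^sub>t\<close> by the band
  width over \<open>\<eta>\<^sub>T\<close>. For the regret, the three-point identity of the Bregman divergence \<open>D\<close> of \<open>R\<close>
  and strong monotonicity give the one-step bound
  \<open>(D(u, r\<^sub>t) - D(u, r\<^sub>t\<^sub>+\<^sub>1)) / \<eta>\<^sub>t + \<eta>\<^sub>t / (\<sigma> p\<^sub>m\<^sub>i\<^sub>n\<^sup>2)\<close>; summing by parts and using that
  inverse-propensity weights are unbiased yields \<open>O(1 / \<eta>\<^sub>T + \<Sum> \<eta>\<^sub>t) = O(T\<^bsup>max \<beta> (1-\<beta>)\<^esup>)\<close>.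
\<close>

lemma has_real_derivative_of_quadratic_error:
  fixes \<phi> :: "real \<Rightarrow> real"
  assumes "\<And>s. \<bar>\<phi> s - \<phi> r - d * (s - r)\<bar> \<le> K * (s - r)\<^sup>2"
  shows "(\<phi> has_real_derivative d) (at r)"
proof -
  have "((\<lambda>y. (\<phi> y - \<phi> r) / (y - r) - d) \<longlongrightarrow> 0) (at r)"
  proof (rule Lim_null_comparison)
    show "\<forall>\<^sub>F y in at r. norm ((\<phi> y - \<phi> r) / (y - r) - d) \<le> K * \<bar>y - r\<bar>"
      unfolding eventually_at_filter
    proof (intro always_eventually allI impI)
      fix y assume "y \<noteq> r"
      then have "(\<phi> y - \<phi> r) / (y - r) - d = (\<phi> y - \<phi> r - d * (y - r)) / (y - r)"
        by (simp add: field_simps)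
      also have "norm \<dots> \<le> K * (y - r)\<^sup>2 / \<bar>y - r\<bar>"
        using assms[of y] \<open>y \<noteq> r\<close> by (simp add: divide_right_mono abs_divide)
      also have "\<dots> = K * \<bar>y - r\<bar>"
      proof -
        have "(y - r)\<^sup>2 = \<bar>y - r\<bar> * \<bar>y - r\<bar>" by (simp add: power2_eq_square)
        moreover have "\<bar>y - r\<bar> \<noteq> 0" using \<open>y \<noteq> r\<close> by simp
        ultimately show ?thesis by (simp only:) (simp add: field_simps)
      qed
      finally show "norm ((\<phi> y - \<phi> r) / (y - r) - d) \<le> K * \<bar>y - r\<bar>" .
    qed
    show "((\<lambda>y. K * \<bar>y - r\<bar>) \<longlongrightarrow> 0) (at r)"
      by (rule tendsto_eq_intros refl)+ simp
  qed
  then show ?thesis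
    by (simp add: has_field_derivative_iff Lim_null[symmetric])
qed

locale bounded_density =
  fixes \<alpha> B \<sigma> M :: real and f :: "real \<Rightarrow> real" and P :: "real measure"
  assumes alpha: "0 < \<alpha>" "\<alpha> < 1"
    and B: "0 < B"
    and dens_meas: "f \<in> borel_measurable borel"
    and dens_nonneg: "\<And>x. 0 \<le> f x"
    and dens_supp: "\<And>x. x \<notin> {0..B} \<Longrightarrow> f x = 0"
    and dens_bdd: "\<And>x. f x \<le> M"
    and P_def: "P = density lborel (\<lambda>x. ennreal (f x))"
    and P_prob: "prob_space P"
    and sigma: "0 < \<sigma>"
begin

interpretation P: prob_space P by (rule P_prob)

lemma dens_bound_nonneg: "0 \<le> M"
  using dens_nonneg[of 0] dens_bdd[of 0] by linarith

lemma sets_P [simp, measurable_cong]: "sets P = sets borel"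
  by (simp add: P_def)

lemma space_P [simp]: "space P = UNIV"
  by (simp add: P_def)

lemma AE_in_support: "AE x in P. 0 \<le> x \<and> x \<le> B"
proof -
  have "AE x in lborel. 0 < ennreal (f x) \<longrightarrow> 0 \<le> x \<and> x \<le> B"
    using dens_supp by (intro AE_I2) (metis atLeastAtMost_iff ennreal_0 less_irrefl)
  thus ?thesis unfolding P_def using dens_meas
    by (subst AE_density) (auto simp: measurable_lborel1)
qed

lemma measure_Ioc_le: assumes "a \<le> b" shows "measure P {a<..b} \<le> M * (b - a)"
proof -
  have "emeasure P {a<..b} = (\<integral>\<^sup>+ x. ennreal (f x) * indicator {a<..b} x \<partial>lborel)"
    unfolding P_def using dens_meas by (subst emeasure_density) (auto simp: measurable_lborel1)
  also have "\<dots> \<le> (\<integral>\<^sup>+ x. ennreal M * indicator {a<..b} x \<partial>lborel)"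
    by (intro nn_integral_mono) (auto simp: indicator_def dens_bdd ennreal_leI)
  also have "\<dots> = ennreal (M * (b - a))"
    using assms dens_bound_nonneg by (subst nn_integral_cmult_indicator) (auto simp: ennreal_mult)
  finally show ?thesis
    unfolding measure_def using dens_bound_nonneg assms by (simp add: enn2real_leI)
qed

lemma integrable_bounded_on_support:
  fixes K :: real
  assumes "g \<in> borel_measurable borel" "\<And>x. 0 \<le> x \<Longrightarrow> x \<le> B \<Longrightarrow> \<bar>g x\<bar> \<le> K"
  shows "integrable P g"
proof (rule P.integrable_const_bound[where B=K])
  show "AE x in P. norm (g x) \<le> K"
    using AE_in_support by eventually_elim (use assms(2) in auto)
qed (use assms(1) in simp)

definition qgrad :: "real \<Rightarrow> real \<Rightarrow> real" where
  "qgrad r x = \<alpha> - (if r < x then 1 else 0)"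

lemma qloss_measurable [measurable]: "qloss \<alpha> r \<in> borel_measurable borel"
  unfolding qloss_def by measurable

lemma qgrad_measurable [measurable]: "qgrad r \<in> borel_measurable borel"
  unfolding qgrad_def by measurable

lemma integrable_qloss: "integrable P (qloss \<alpha> r)"
proof (rule integrable_bounded_on_support[where K="\<bar>r\<bar> + B"])
  fix x assume x: "0 \<le> x" "x \<le> B"
  have "\<bar>qloss \<alpha> r x\<bar> = \<bar>\<alpha> - (if r < x then 1 else 0)\<bar> * \<bar>r - x\<bar>"
    by (simp add: qloss_def abs_mult)
  also have "\<dots> \<le> 1 * \<bar>r - x\<bar>" using alpha by (intro mult_right_mono) auto
  finally show "\<bar>qloss \<alpha> r x\<bar> \<le> \<bar>r\<bar> + B" using x by simp
qed simp

lemma integrable_qgrad: "integrable P (qgrad r)"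
  by (rule integrable_bounded_on_support[where K=1]) (use alpha in \<open>auto simp: qgrad_def\<close>)

lemma qloss_subgradient: "qloss \<alpha> r x + qgrad r x * (s - r) \<le> qloss \<alpha> s x"
  unfolding qloss_def qgrad_def by (auto simp: algebra_simps)

lemma qloss_linearization_error:
  "qloss \<alpha> s x - qloss \<alpha> r x - qgrad r x * (s - r) \<le> \<bar>s - r\<bar> * indicator {min r s<..max r s} x"
  unfolding qloss_def qgrad_def by (auto simp: algebra_simps indicator_def)

definition risk :: "real \<Rightarrow> real" where "risk r = (\<integral>x. qloss \<alpha> r x \<partial>P)"

definition risk_grad :: "real \<Rightarrow> real" where "risk_grad r = (\<integral>x. qgrad r x \<partial>P)"

lemma risk_subgradient: "risk r + risk_grad r * (s - r) \<le> risk s"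
proof -
  have "risk r + risk_grad r * (s - r) = (\<integral>x. qloss \<alpha> r x + qgrad r x * (s - r) \<partial>P)"
    unfolding risk_def risk_grad_def using integrable_qloss integrable_qgrad by simp
  also have "\<dots> \<le> risk s"
    unfolding risk_def using integrable_qloss integrable_qgrad
    by (intro integral_mono qloss_subgradient) auto
  finally show ?thesis .
qed

lemma risk_linearization_error: "risk s - risk r - risk_grad r * (s - r) \<le> M * (s - r)\<^sup>2"
proof -
  have "risk s - risk r - risk_grad r * (s - r)
      = (\<integral>x. qloss \<alpha> s x - qloss \<alpha> r x - qgrad r x * (s - r) \<partial>P)"
    unfolding risk_def risk_grad_def using integrable_qloss integrable_qgrad by simp
  also have "\<dots> \<le> (\<integral>x. \<bar>s - r\<bar> * indicator {min r s<..max r s} x \<partial>P)"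
    using integrable_qloss integrable_qgrad
    by (intro integral_mono qloss_linearization_error)
       (auto intro!: integrable_real_indicator simp: P.emeasure_finite less_top[symmetric])
  also have "\<dots> = \<bar>s - r\<bar> * measure P {min r s<..max r s}" by simp
  also have "\<dots> \<le> \<bar>s - r\<bar> * (M * (max r s - min r s))"
    by (intro mult_left_mono measure_Ioc_le) auto
  also have "\<dots> = M * (s - r)\<^sup>2" by (auto simp: max_def min_def power2_eq_square algebra_simps)
  finally show ?thesis .
qed

lemma risk_has_derivative: "(risk has_real_derivative risk_grad r) (at r)"
proof (rule has_real_derivative_of_quadratic_error[where K=M])
  fix s
  show "\<bar>risk s - risk r - risk_grad r * (s - r)\<bar> \<le> M * (s - r)\<^sup>2"
    using risk_subgradient[of r s] risk_linearization_error[of s r] by simp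
qed

definition Rgrad :: "real \<Rightarrow> real" where "Rgrad r = risk_grad r + \<sigma> * r"

lemma Rfun_eq: "Rfun P \<alpha> \<sigma> = (\<lambda>r. risk r + \<sigma> / 2 * r\<^sup>2)"
  by (auto simp: Rfun_def risk_def)

lemma deriv_Rfun: "deriv (Rfun P \<alpha> \<sigma>) = Rgrad"
proof -
  have "(Rfun P \<alpha> \<sigma> has_real_derivative Rgrad r) (at r)" for r
    unfolding Rfun_eq Rgrad_def
    by (rule derivative_eq_intros risk_has_derivative refl)+ (simp add: power2_eq_square)
  then show ?thesis using DERIV_imp_deriv by blast
qed

lemma Rfun_subgradient: "Rfun P \<alpha> \<sigma> r + Rgrad r * (u - r) \<le> Rfun P \<alpha> \<sigma> u"
proof -
  have "0 \<le> \<sigma> / 2 * (u - r)\<^sup>2" using sigma by simp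
  then have "\<sigma> / 2 * r\<^sup>2 + \<sigma> * r * (u - r) \<le> \<sigma> / 2 * u\<^sup>2"
    by (simp add: power2_eq_square algebra_simps)
  then show ?thesis
    using risk_subgradient[of r u] unfolding Rfun_eq Rgrad_def by (simp add: algebra_simps)
qed

lemma risk_grad_bounds: "\<alpha> - 1 \<le> risk_grad r" "risk_grad r \<le> \<alpha>"
proof -
  have "(\<integral>x. (\<alpha> - 1) \<partial>P) \<le> risk_grad r" "risk_grad r \<le> (\<integral>x. \<alpha> \<partial>P)"
    unfolding risk_grad_def by (intro integral_mono integrable_qgrad; simp add: qgrad_def)+
  then show "\<alpha> - 1 \<le> risk_grad r" "risk_grad r \<le> \<alpha>" using P.prob_space by simp_all
qed

lemma risk_grad_diff: assumes "r \<le> s" shows "risk_grad s - risk_grad r = measure P {r<..s}"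
proof -
  have "risk_grad s - risk_grad r = (\<integral>x. qgrad s x - qgrad r x \<partial>P)"
    unfolding risk_grad_def using integrable_qgrad by simp
  also have "\<dots> = (\<integral>x. indicator {r<..s} x \<partial>P)"
    using assms by (intro Bochner_Integration.integral_cong) (auto simp: qgrad_def indicator_def)
  finally show ?thesis by simp
qed

lemma continuous_on_risk_grad: "continuous_on UNIV risk_grad"
proof (rule lipschitz_on_continuous_on)
  have "dist (risk_grad x) (risk_grad y) \<le> M * dist x y" if "x \<le> y" for x y
    using risk_grad_diff[OF that] measure_Ioc_le[OF that] measure_nonneg[of P "{x<..y}"] that
    unfolding dist_real_def by (subst (1 2) abs_minus_commute) simp
  then show "M-lipschitz_on UNIV risk_grad"
    by (intro lipschitz_onI dens_bound_nonneg) (metis dist_commute linear)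
qed

lemma Rgrad_strongly_mono: "a \<le> b \<Longrightarrow> \<sigma> * (b - a) \<le> Rgrad b - Rgrad a"
  using risk_grad_diff[of a b] measure_nonneg[of P "{a<..b}"]
  unfolding Rgrad_def by (simp add: algebra_simps)

lemma Rgrad_bounds: "\<alpha> - 1 + \<sigma> * r \<le> Rgrad r" "Rgrad r \<le> \<alpha> + \<sigma> * r"
  using risk_grad_bounds[of r] unfolding Rgrad_def by auto

lemma Rgrad_inv: "Rgrad (inv Rgrad y) = y"
proof -
  have cont: "continuous_on S Rgrad" for S
    unfolding Rgrad_def by (intro continuous_intros continuous_on_subset[OF continuous_on_risk_grad]) auto
  define a where "a = (y - \<alpha>) / \<sigma>"
  define b where "b = (y - \<alpha> + 1) / \<sigma>"
  have "Rgrad a \<le> y" "y \<le> Rgrad b" "a \<le> b"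
    using Rgrad_bounds(2)[of a] Rgrad_bounds(1)[of b] sigma
    by (simp_all add: a_def b_def divide_right_mono)
  then have "y \<in> range Rgrad" using IVT'[of Rgrad a y b, OF _ _ _ cont] by blast
  then show ?thesis by (rule f_inv_into_f)
qed

end



lemma summation_by_parts_deviation:
  fixes S e :: "nat \<Rightarrow> real"
  assumes e_pos: "\<And>t. 1 \<le> t \<Longrightarrow> t \<le> T \<Longrightarrow> 0 < e t"
    and e_mono: "\<And>t. 1 \<le> t \<Longrightarrow> t < T \<Longrightarrow> e (Suc t) \<le> e t"
    and S_bound: "\<And>k. k \<le> T \<Longrightarrow> \<bar>S k\<bar> \<le> W" and S0: "S 0 = 0"
    and k: "1 \<le> k" "k \<le> T"
  shows "\<bar>(\<Sum>t=1..k. (S t - S (t-1)) / e t) - S k / e k\<bar> \<le> W * (1 / e k - 1 / e 1)"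
  using k
proof (induction k rule: nat_induct_at_least)
  case base
  then show ?case using S0 by simp
next
  case (Suc k)
  have ek: "0 < e (Suc k)" "e (Suc k) \<le> e k"
    using e_pos[of "Suc k"] e_mono[of k] Suc.hyps Suc.prems by auto
  then have inv_le: "1 / e k \<le> 1 / e (Suc k)" by (simp add: frac_le)
  have "(\<Sum>t=1..Suc k. (S t - S (t-1)) / e t) - S (Suc k) / e (Suc k)
      = ((\<Sum>t=1..k. (S t - S (t-1)) / e t) - S k / e k) + S k * (1 / e k - 1 / e (Suc k))"
    using Suc.hyps by (simp add: sum.cl_ivl_Suc diff_divide_distrib right_diff_distrib)
  moreover have "\<bar>S k * (1 / e k - 1 / e (Suc k))\<bar> \<le> W * (1 / e (Suc k) - 1 / e k)"
    using S_bound[of k] Suc.prems inv_le by (simp add: abs_mult mult_right_mono)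
  ultimately show ?case using Suc.IH Suc.prems by (simp add: algebra_simps)
qed

lemma summation_by_parts_bound:
  fixes S e :: "nat \<Rightarrow> real"
  assumes e_pos: "\<And>t. 1 \<le> t \<Longrightarrow> t \<le> T \<Longrightarrow> 0 < e t"
    and e_mono: "\<And>t. 1 \<le> t \<Longrightarrow> t < T \<Longrightarrow> e (Suc t) \<le> e t"
    and S_bound: "\<And>k. k \<le> T \<Longrightarrow> \<bar>S k\<bar> \<le> W" and S0: "S 0 = 0" and T: "1 \<le> T"
  shows "\<bar>\<Sum>t=1..T. (S t - S (t-1)) / e t\<bar> \<le> 2 * W / e T"
proof -
  have eT: "0 < e 1" "0 < e T" using e_pos[of 1] e_pos[of T] T by auto
  have "\<bar>S T / e T\<bar> \<le> W / e T"
    using S_bound[of T] eT by (simp add: abs_divide divide_right_mono)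
  moreover have "W * (1 / e T - 1 / e 1) \<le> W / e T"
    using S_bound[of 0] eT by (simp add: right_diff_distrib)
  moreover have "\<bar>(\<Sum>t=1..T. (S t - S (t-1)) / e t) - S T / e T\<bar> \<le> W * (1 / e T - 1 / e 1)"
    by (rule summation_by_parts_deviation[where S=S and e=e and T=T and W=W and k=T,
          OF e_pos e_mono S_bound S0 T order.refl])
  ultimately show ?thesis by linarith
qed

lemma sum_powr_neg_le:
  fixes \<beta> :: real
  assumes beta: "0 < \<beta>" "\<beta> < 1" and T: "1 \<le> T"
  shows "(\<Sum>t=1..T. real t powr (-\<beta>)) \<le> real T powr (1 - \<beta>) / (1 - \<beta>)"
  using T
proof (induction T rule: nat_induct_at_least)
  case base
  then show ?case using beta by simp
next
  case (Suc T)
  have "\<exists>z. real T < z \<and> z < real (Suc T) \<and> real (Suc T) powr (1 - \<beta>) - real T powr (1 - \<beta>)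
      = (real (Suc T) - real T) * ((1 - \<beta>) * z powr (1 - \<beta> - 1))"
    using Suc.hyps by (intro MVT2 has_real_derivative_powr) auto
  then obtain z where z: "real T < z" "z < real (Suc T)"
    "real (Suc T) powr (1 - \<beta>) - real T powr (1 - \<beta>) = (1 - \<beta>) * z powr (- \<beta>)"
    by auto
  have "real (Suc T) powr (-\<beta>) \<le> z powr (-\<beta>)"
    using z Suc.hyps beta by (intro powr_mono2') auto
  then have "(1 - \<beta>) * real (Suc T) powr (-\<beta>) \<le> real (Suc T) powr (1 - \<beta>) - real T powr (1 - \<beta>)"
    using z(3) beta by (simp add: mult_left_mono)
  then have "real (Suc T) powr (-\<beta>)
      \<le> real (Suc T) powr (1 - \<beta>) / (1 - \<beta>) - real T powr (1 - \<beta>) / (1 - \<beta>)"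
    using beta by (simp add: pos_le_divide_eq mult.commute diff_divide_distrib[symmetric])
  then show ?case using Suc.IH by (simp add: sum.cl_ivl_Suc)
qed

lemma qloss_subgradient_miscov: "qloss \<alpha> r x + (\<alpha> - miscov r x) * (u - r) \<le> qloss \<alpha> u x"
  unfolding qloss_def miscov_def by (auto simp: algebra_simps)

text \<open>Lets the comparator in the regret be restricted to \<open>[0, B]\<close>.\<close>
lemma qloss_clamp_le:
  assumes "0 < \<alpha>" "\<alpha> < 1" "0 \<le> x" "x \<le> B"
  shows "qloss \<alpha> (max 0 (min B v)) x \<le> qloss \<alpha> v x"
  using assms unfolding qloss_def
  by (auto simp: max_def min_def algebra_simps intro: mult_left_mono mult_right_mono)

lemma imocp_cong_past:
  "(\<And>s. s < t \<Longrightarrow> obs s = obs' s) \<Longrightarrow> imocp G \<alpha> r1 e p rs obs t = imocp G \<alpha> r1 e p rs obs' t"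
proof (induction G \<alpha> r1 e p rs obs t rule: imocp.induct)
  case (3 G \<alpha> r1 \<eta> p rs obs t)
  then show ?case by (simp add: Let_def)
qed auto


lemma finite_set_obs_pmf: "finite (set_pmf (obs_pmf p T))"
  unfolding obs_pmf_def
  by (rule finite_subset[OF set_Pi_pmf_subset']) (auto intro!: finite_PiE_dflt)

lemma integrable_obs_pmf [simp]:
  fixes g :: "(nat \<Rightarrow> bool) \<Rightarrow> real"
  shows "integrable (measure_pmf (obs_pmf p T)) g"
  by (rule integrable_measure_pmf_finite[OF finite_set_obs_pmf])

lemma expectation_pair_pmf_mult:
  fixes g :: "'a \<Rightarrow> real" and h :: "'b \<Rightarrow> real"
  assumes fin: "finite (set_pmf A)" "finite (set_pmf B)"
    and nonneg: "\<And>a. 0 \<le> g a" "\<And>b. 0 \<le> h b"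
  shows "measure_pmf.expectation (pair_pmf A B) (\<lambda>z. g (fst z) * h (snd z))
       = measure_pmf.expectation A g * measure_pmf.expectation B h"
proof -
  have int: "integrable (measure_pmf A) g" "integrable (measure_pmf B) h"
    "integrable (measure_pmf (pair_pmf A B)) (\<lambda>z. g (fst z) * h (snd z))"
    using fin by (auto intro!: integrable_measure_pmf_finite)
  have "ennreal (measure_pmf.expectation (pair_pmf A B) (\<lambda>z. g (fst z) * h (snd z)))
      = (\<integral>\<^sup>+z. ennreal (g (fst z) * h (snd z)) \<partial>pair_pmf A B)"
    using int nonneg by (subst nn_integral_eq_integral) auto
  also have "\<dots> = (\<integral>\<^sup>+a. \<integral>\<^sup>+b. ennreal (g a) * ennreal (h b) \<partial>B \<partial>A)"
    using nonneg by (simp add: nn_integral_pair_pmf' ennreal_mult)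
  also have "\<dots> = (\<integral>\<^sup>+a. ennreal (g a) * (\<integral>\<^sup>+b. ennreal (h b) \<partial>B) \<partial>A)"
    by (simp add: nn_integral_cmult)
  also have "\<dots> = (\<integral>\<^sup>+a. ennreal (g a) \<partial>A) * (\<integral>\<^sup>+b. ennreal (h b) \<partial>B)"
    by (simp add: nn_integral_multc)
  also have "\<dots> = ennreal (measure_pmf.expectation A g * measure_pmf.expectation B h)"
    using int nonneg by (subst (1 2) nn_integral_eq_integral) (auto simp: ennreal_mult integral_nonneg_AE)
  finally show ?thesis
    using nonneg by (subst (asm) ennreal_inj) (auto intro!: integral_nonneg_AE mult_nonneg_nonneg)
qed

lemma expectation_obs_indicator:
  assumes "t \<in> {1..T}" "0 \<le> p t" "p t \<le> 1"
  shows "measure_pmf.expectation (obs_pmf p T) (\<lambda>obs. if obs t then 1 else 0 :: real) = p t"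
proof -
  have "measure_pmf.expectation (obs_pmf p T) (\<lambda>obs. if obs t then 1 else 0 :: real)
      = measure_pmf.expectation (map_pmf (\<lambda>f. f t) (obs_pmf p T)) (\<lambda>b. if b then 1 else 0 :: real)"
    by simp
  also have "map_pmf (\<lambda>f. f t) (obs_pmf p T) = bernoulli_pmf (p t)"
    unfolding obs_pmf_def using assms by (subst Pi_pmf_component) auto
  finally show ?thesis using assms by simp
qed

lemma expectation_obs_pmf_mult_indicator:
  fixes h :: "(nat \<Rightarrow> bool) \<Rightarrow> real"
  assumes t: "t \<in> {1..T}" and pt: "0 \<le> p t" "p t \<le> 1"
    and h_indep: "\<And>f y. h (f(t := y)) = h f" and h_nonneg: "\<And>f. 0 \<le> h f"
  shows "measure_pmf.expectation (obs_pmf p T) (\<lambda>f. h f * (if f t then 1 else 0))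
       = p t * measure_pmf.expectation (obs_pmf p T) h"
proof -
  define A where "A = {1..T} - {t}"
  define \<Omega> where "\<Omega> = Pi_pmf A False (\<lambda>t. bernoulli_pmf (p t))"
  have A: "finite A" "t \<notin> A" by (auto simp: A_def)
  have split: "obs_pmf p T = map_pmf (\<lambda>(y, f). f(t := y)) (pair_pmf (bernoulli_pmf (p t)) \<Omega>)"
    unfolding obs_pmf_def \<Omega>_def using t A
    by (subst Pi_pmf_insert[symmetric]) (auto simp: A_def intro!: arg_cong[where f="\<lambda>A. Pi_pmf A _ _"])
  have fin: "finite (set_pmf (bernoulli_pmf (p t)))" "finite (set_pmf \<Omega>)"
    unfolding \<Omega>_def using A by (auto intro!: finite_subset[OF set_Pi_pmf_subset'] finite_PiE_dflt)
  have "measure_pmf.expectation (obs_pmf p T) (\<lambda>f. h f * (if f t then 1 else 0))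
      = measure_pmf.expectation (pair_pmf (bernoulli_pmf (p t)) \<Omega>)
          (\<lambda>z. (if fst z then 1 else 0) * h (snd z))"
    unfolding split integral_map_pmf by (simp add: case_prod_unfold h_indep ac_simps)
  also have "\<dots> = p t * measure_pmf.expectation \<Omega> h"
    using pt by (subst expectation_pair_pmf_mult[OF fin]) (auto simp: h_nonneg)
  also have "measure_pmf.expectation \<Omega> h = measure_pmf.expectation (obs_pmf p T) h"
    unfolding split integral_map_pmf by (simp add: case_prod_unfold h_indep)
  finally show ?thesis .
qed


lemma expectation_inverse_propensity_sum:
  assumes "\<And>t. t \<in> {1..T} \<Longrightarrow> 0 < p t \<and> p t \<le> 1"
  shows "measure_pmf.expectation (obs_pmf p T) (\<lambda>obs. \<Sum>t\<in>{1..T}. a t * (if obs t then 1 else 0) / p t)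
       = (\<Sum>t\<in>{1..T}. a t)"
proof -
  have "measure_pmf.expectation (obs_pmf p T) (\<lambda>obs. a t / p t * (if obs t then 1 else 0)) = a t"
    if "t \<in> {1..T}" for t
    using assms[OF that] expectation_obs_indicator[OF that, of p] by simp
  then show ?thesis by (simp add: Bochner_Integration.integral_sum ac_simps)
qed

lemma step_size_schedules:
  fixes c \<beta> :: real and \<eta> :: "nat \<Rightarrow> nat \<Rightarrow> real"
  assumes c: "0 < c" and beta: "0 < \<beta>" "\<beta> < 1" and T: "1 \<le> T"
    and step: "\<eta> = (\<lambda>T t. c * real T powr (-\<beta>)) \<or> \<eta> = (\<lambda>T t. c * real t powr (-\<beta>))"
  shows "\<And>t. 1 \<le> t \<Longrightarrow> 0 < \<eta> T t \<and> \<eta> T t \<le> c"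
    and "\<And>t. 1 \<le> t \<Longrightarrow> \<eta> T (Suc t) \<le> \<eta> T t"
    and "\<eta> T T = c * real T powr (-\<beta>)"
    and "(\<Sum>t=1..T. \<eta> T t) \<le> c * real T powr (1 - \<beta>) / (1 - \<beta>)"
proof -
  have powr_le_1: "0 < real t powr (-\<beta>) \<and> real t powr (-\<beta>) \<le> 1" if "1 \<le> t" for t :: nat
    using powr_mono[of "-\<beta>" 0 "real t"] that beta by simp
  show "0 < \<eta> T t \<and> \<eta> T t \<le> c" if "1 \<le> t" for t
    using step powr_le_1[OF T] powr_le_1[OF that] c by (auto simp: mult_left_le)
  show "\<eta> T (Suc t) \<le> \<eta> T t" if "1 \<le> t" for t
    using step that beta c by (auto intro!: mult_left_mono powr_mono2')
  show "\<eta> T T = c * real T powr (-\<beta>)" using step by auto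
  consider "\<eta> = (\<lambda>T t. c * real T powr (-\<beta>))" | "\<eta> = (\<lambda>T t. c * real t powr (-\<beta>))"
    using step by blast
  then show "(\<Sum>t=1..T. \<eta> T t) \<le> c * real T powr (1 - \<beta>) / (1 - \<beta>)"
  proof cases
    case 1
    have "(\<Sum>t=1..T. \<eta> T t) = c * real T powr (1 - \<beta>)"
      using T by (simp add: 1 powr_diff powr_minus divide_inverse)
    also have "\<dots> \<le> c * real T powr (1 - \<beta>) / (1 - \<beta>)"
      using beta c by (simp add: le_divide_eq mult_left_le)
    finally show ?thesis .
  next
    case 2
    have "(\<Sum>t=1..T. \<eta> T t) = c * (\<Sum>t=1..T. real t powr (-\<beta>))"
      by (simp add: 2 sum_distrib_left)
    also have "\<dots> \<le> c * (real T powr (1 - \<beta>) / (1 - \<beta>))"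
      using sum_powr_neg_le[OF beta T] c by (intro mult_left_mono) auto
    finally show ?thesis by simp
  qed
qed

locale imocp_setting =
  fixes G R :: "real \<Rightarrow> real" and \<alpha> \<sigma> B c pmin r1 :: real and p rs :: "nat \<Rightarrow> real"
  assumes G_inv: "\<And>y. G (inv G y) = y"
    and G_strongly_mono: "\<And>a b. a \<le> b \<Longrightarrow> \<sigma> * (b - a) \<le> G b - G a"
    and G_lower: "\<And>r. \<alpha> - 1 + \<sigma> * r \<le> G r" and G_upper: "\<And>r. G r \<le> \<alpha> + \<sigma> * r"
    and R_subgradient: "\<And>u r. R r + G r * (u - r) \<le> R u"
    and alpha: "0 < \<alpha>" "\<alpha> < 1" and sigma: "0 < \<sigma>" and B: "0 < B"
    and rs: "\<And>t. 0 \<le> rs t \<and> rs t \<le> B"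
    and p: "\<And>t. pmin \<le> p t \<and> p t \<le> 1" and pmin: "0 < pmin"
    and r1: "0 \<le> r1" "r1 \<le> B" and c: "0 < c"
begin

text \<open>All \<open>G(r\<^sub>t)\<close> stay in \<open>[band_lo, band_hi]\<close>; \<open>c\<close> bounds every step size.\<close>
definition band_lo :: real where "band_lo = G 0 - c / pmin"
definition band_hi :: real where "band_hi = G B + c / pmin"
definition thr_bound :: real
  where "thr_bound = \<bar>(band_hi - \<alpha> + 1) / \<sigma>\<bar> + \<bar>(band_lo - \<alpha>) / \<sigma>\<bar> + B"
definition grad_bound :: real where "grad_bound = \<alpha> + 1 + \<sigma> * thr_bound"
definition bregman_bound :: real where "bregman_bound = 4 * grad_bound * thr_bound"

definition bregman :: "real \<Rightarrow> real \<Rightarrow> real" where "bregman u r = R u - R r - G r * (u - r)"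

lemma G_mono: assumes "a \<le> b" shows "G a \<le> G b"
proof -
  have "0 \<le> \<sigma> * (b - a)" using sigma assms by simp
  then show ?thesis using G_strongly_mono[OF assms] by linarith
qed

lemma bregman_nonneg: "0 \<le> bregman u r"
  using R_subgradient[of r u] unfolding bregman_def by simp

lemma bregman_le: "bregman u r \<le> (G u - G r) * (u - r)"
  using R_subgradient[of u r] unfolding bregman_def by (simp add: algebra_simps)

lemma bregman_three_point: "(G a - G b) * (a - u) = bregman u a - bregman u b + bregman a b"
  unfolding bregman_def by (simp add: algebra_simps)

lemma G_diff_mult_le: "(G a - G b) * (a - b) \<le> (G a - G b)\<^sup>2 / \<sigma>"
proof -
  have "(G a - G b) * (a - b) = \<bar>G a - G b\<bar> * \<bar>a - b\<bar> \<and> \<sigma> * \<bar>a - b\<bar> \<le> \<bar>G a - G b\<bar>"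
  proof (cases "a \<le> b")
    case True
    then show ?thesis using G_mono[OF True] G_strongly_mono[OF True]
      by (simp add: abs_of_nonpos algebra_simps)
  next
    case False
    then have "b \<le> a" by simp
    then show ?thesis using G_mono[of b a] G_strongly_mono[of b a] by simp
  qed
  then have same_sign: "(G a - G b) * (a - b) = \<bar>G a - G b\<bar> * \<bar>a - b\<bar>"
    and lower: "\<sigma> * \<bar>a - b\<bar> \<le> \<bar>G a - G b\<bar>" by auto
  have "\<bar>G a - G b\<bar> * \<bar>a - b\<bar> \<le> \<bar>G a - G b\<bar> * (\<bar>G a - G b\<bar> / \<sigma>)"
    using lower sigma by (intro mult_left_mono) (simp_all add: field_simps)
  then show ?thesis using same_sign by (simp add: power2_eq_square)
qed

lemma thr_bound_nonneg: "0 \<le> thr_bound"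
  unfolding thr_bound_def using B by simp

lemma bregman_bound_nonneg: "0 \<le> bregman_bound"
  unfolding bregman_bound_def grad_bound_def using thr_bound_nonneg alpha sigma by simp

lemma abs_G_le: assumes "\<bar>x\<bar> \<le> thr_bound" shows "\<bar>G x\<bar> \<le> grad_bound"
proof -
  have "\<bar>\<sigma> * x\<bar> \<le> \<sigma> * thr_bound" using assms sigma by (simp add: abs_mult)
  then show ?thesis using G_lower[of x] G_upper[of x] alpha unfolding grad_bound_def by linarith
qed

lemma bregman_le_bound:
  assumes "\<bar>u\<bar> \<le> thr_bound" "\<bar>r\<bar> \<le> thr_bound" shows "bregman u r \<le> bregman_bound"
proof -
  have "bregman u r \<le> \<bar>G u - G r\<bar> * \<bar>u - r\<bar>"
    using bregman_le[of u r] by (simp add: abs_mult[symmetric])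
  also have "\<dots> \<le> (2 * grad_bound) * (2 * thr_bound)"
    using abs_G_le[OF assms(1)] abs_G_le[OF assms(2)] assms by (intro mult_mono) auto
  finally show ?thesis unfolding bregman_bound_def by simp
qed

end


locale imocp_run = imocp_setting +
  fixes e :: "nat \<Rightarrow> real"
  assumes e: "\<And>t. 1 \<le> t \<Longrightarrow> 0 < e t \<and> e t \<le> c"
begin

definition thr :: "(nat \<Rightarrow> bool) \<Rightarrow> nat \<Rightarrow> real" where "thr obs t = imocp G \<alpha> r1 e p rs obs t"

definition grad_est :: "(nat \<Rightarrow> bool) \<Rightarrow> nat \<Rightarrow> real"
  where "grad_est obs t = (\<alpha> - miscov (thr obs t) (rs t)) * (if obs t then 1 else 0) / p t"

lemma thr_1: "thr obs (Suc 0) = r1"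
  by (simp add: thr_def)

lemma G_thr_step: assumes "1 \<le> t" shows "G (thr obs (Suc t)) = G (thr obs t) - e t * grad_est obs t"
proof -
  obtain k where "t = Suc k" using assms by (cases t) auto
  then show ?thesis unfolding thr_def grad_est_def by (simp add: Let_def G_inv)
qed

lemma abs_grad_est_le: "\<bar>grad_est obs t\<bar> \<le> 1 / pmin"
proof -
  have pt: "pmin \<le> p t" "0 < p t" using p[of t] pmin by auto
  have "\<bar>grad_est obs t\<bar> \<le> 1 / p t"
    using alpha pt by (auto simp: grad_est_def miscov_def abs_mult abs_divide divide_right_mono)
  also have "\<dots> \<le> 1 / pmin" using pt pmin by (intro divide_left_mono) auto
  finally show ?thesis .
qed

lemma abs_step_le: assumes "1 \<le> t" shows "\<bar>e t * grad_est obs t\<bar> \<le> c / pmin"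
proof -
  have "\<bar>e t * grad_est obs t\<bar> \<le> c * (1 / pmin)"
    unfolding abs_mult using e[OF assms] abs_grad_est_le pmin by (intro mult_mono) auto
  then show ?thesis by simp
qed

text \<open>Above \<open>B\<close> every score is covered, so the step lowers \<open>G(r\<^sub>t)\<close>; below \<open>0\<close> it raises it.\<close>
lemma G_thr_in_band: assumes "1 \<le> t" shows "band_lo \<le> G (thr obs t) \<and> G (thr obs t) \<le> band_hi"
  using assms
proof (induction t rule: nat_induct_at_least)
  case base
  have "0 \<le> c / pmin" using c pmin by simp
  then show ?case
    using G_mono[of 0 r1] G_mono[of r1 B] r1 by (simp add: thr_1 band_lo_def band_hi_def)
next
  case (Suc t)
  let ?y = "G (thr obs t)" and ?d = "e t * grad_est obs t"
  have step: "G (thr obs (Suc t)) = ?y - ?d" by (rule G_thr_step[OF Suc.hyps])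
  have small: "\<bar>?d\<bar> \<le> c / pmin" by (rule abs_step_le[OF Suc.hyps])
  have et: "0 < e t" using e[OF Suc.hyps] by simp
  have pt: "0 < p t" using p[of t] pmin by linarith
  have G0B: "G 0 \<le> G B" using G_mono B by simp
  consider "B < thr obs t" | "thr obs t < 0" | "0 \<le> thr obs t" "thr obs t \<le> B" by linarith
  then show ?case
  proof cases
    case 1
    then have "0 \<le> ?d" using rs[of t] alpha et pt by (simp add: grad_est_def miscov_def)
    moreover have "G B \<le> ?y" using G_mono 1 by simp
    ultimately show ?thesis using step small Suc.IH G0B unfolding band_lo_def band_hi_def by auto
  next
    case 2
    then have "?d \<le> 0" using rs[of t] alpha et pt
      by (simp add: grad_est_def miscov_def mult_nonneg_nonpos divide_nonpos_pos)
    moreover have "?y \<le> G 0" using G_mono 2 by simp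
    ultimately show ?thesis using step small Suc.IH G0B unfolding band_lo_def band_hi_def by auto
  next
    case 3
    then have "G 0 \<le> ?y" "?y \<le> G B" using G_mono by auto
    then show ?thesis using step small unfolding band_lo_def band_hi_def by auto
  qed
qed

lemma abs_thr_le: assumes "1 \<le> t" shows "\<bar>thr obs t\<bar> \<le> thr_bound"
proof -
  have band: "band_lo \<le> G (thr obs t)" "G (thr obs t) \<le> band_hi" using G_thr_in_band[OF assms] by auto
  have "thr obs t \<le> (band_hi - \<alpha> + 1) / \<sigma>"
    using G_lower[of "thr obs t"] band sigma by (simp add: field_simps)
  moreover have "(band_lo - \<alpha>) / \<sigma> \<le> thr obs t"
    using G_upper[of "thr obs t"] band sigma by (simp add: field_simps)
  ultimately show ?thesis unfolding thr_bound_def using B by linarith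
qed

text \<open>Since \<open>grad_est\<close> is the increment of \<open>G(r\<^sub>t)\<close> divided by \<open>e t\<close>,
  its sum telescopes up to the variation of the step sizes.\<close>
lemma abs_sum_grad_est_le:
  assumes T: "1 \<le> T" and e_mono: "\<And>t. 1 \<le> t \<Longrightarrow> t < T \<Longrightarrow> e (Suc t) \<le> e t"
  shows "\<bar>\<Sum>t=1..T. grad_est obs t\<bar> \<le> 2 * (band_hi - band_lo) / e T"
proof -
  define S where "S k = G (thr obs 1) - G (thr obs (Suc k))" for k
  have "(\<Sum>t=1..T. grad_est obs t) = (\<Sum>t=1..T. (S t - S (t-1)) / e t)"
  proof (rule sum.cong[OF refl])
    fix t assume "t \<in> {1..T}"
    then have t: "1 \<le> t" by simp
    then have "S t - S (t-1) = e t * grad_est obs t"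
      using G_thr_step[OF t, of obs] unfolding S_def by (cases t) auto
    then show "grad_est obs t = (S t - S (t-1)) / e t" using e[OF t] by simp
  qed
  also have "\<bar>\<dots>\<bar> \<le> 2 * (band_hi - band_lo) / e T"
  proof (rule summation_by_parts_bound[where e=e and T=T and S=S])
    show "\<bar>S k\<bar> \<le> band_hi - band_lo" for k
      using G_thr_in_band[of 1 obs] G_thr_in_band[of "Suc k" obs] unfolding S_def by auto
  qed (use e e_mono T in \<open>auto simp: S_def\<close>)
  finally show ?thesis .
qed

text \<open>The one-step inequality of mirror descent with mirror map \<open>R\<close>.\<close>
lemma weighted_regret_step_le:
  assumes t: "1 \<le> t"
  shows "(qloss \<alpha> (thr obs t) (rs t) - qloss \<alpha> u (rs t)) * (if obs t then 1 else 0) / p t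
     \<le> (bregman u (thr obs t) - bregman u (thr obs (Suc t))) / e t + e t / (\<sigma> * pmin\<^sup>2)"
proof -
  let ?r = "thr obs t" and ?r' = "thr obs (Suc t)"
  have pt: "0 < p t" using p[of t] pmin by linarith
  have et: "0 < e t" using e[OF t] by simp
  have "qloss \<alpha> ?r (rs t) - qloss \<alpha> u (rs t) \<le> (\<alpha> - miscov ?r (rs t)) * (?r - u)"
    using qloss_subgradient_miscov[of \<alpha> ?r "rs t" u] by (simp add: algebra_simps)
  then have "(qloss \<alpha> ?r (rs t) - qloss \<alpha> u (rs t)) * (if obs t then 1 else 0) / p t
      \<le> grad_est obs t * (?r - u)"
    using pt unfolding grad_est_def by (simp add: divide_right_mono)
  also have "\<dots> = (G ?r - G ?r') / e t * (?r - u)"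
    using G_thr_step[OF t, of obs] et by simp
  also have "\<dots> = (bregman u ?r - bregman u ?r') / e t + bregman ?r ?r' / e t"
    using bregman_three_point[of ?r ?r' u] by (simp add: add_divide_distrib)
  also have "bregman ?r ?r' / e t \<le> e t / (\<sigma> * pmin\<^sup>2)"
  proof -
    have "bregman ?r ?r' \<le> (e t * grad_est obs t)\<^sup>2 / \<sigma>"
      using bregman_le[of ?r ?r'] G_diff_mult_le[of ?r ?r'] G_thr_step[OF t, of obs] by simp
    also have "\<dots> \<le> (e t * (1 / pmin))\<^sup>2 / \<sigma>"
    proof -
      have "\<bar>e t * grad_est obs t\<bar> = e t * \<bar>grad_est obs t\<bar>" using et by (simp add: abs_mult)
      also have "\<dots> \<le> e t * (1 / pmin)" using abs_grad_est_le[of obs t] et by (intro mult_left_mono) auto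
      finally have "\<bar>e t * grad_est obs t\<bar> \<le> e t * (1 / pmin)" .
      then show ?thesis
        using sigma et pmin by (intro divide_right_mono) (auto simp: abs_le_square_iff[symmetric])
    qed
    finally show ?thesis
      using et by (simp add: power2_eq_square field_simps)
  qed
  finally show ?thesis by simp
qed

lemma weighted_regret_le:
  assumes T: "1 \<le> T" and e_mono: "\<And>t. 1 \<le> t \<Longrightarrow> t < T \<Longrightarrow> e (Suc t) \<le> e t"
    and u: "\<bar>u\<bar> \<le> thr_bound"
  shows "(\<Sum>t=1..T. (qloss \<alpha> (thr obs t) (rs t) - qloss \<alpha> u (rs t)) * (if obs t then 1 else 0) / p t)
     \<le> 2 * bregman_bound / e T + (\<Sum>t=1..T. e t) / (\<sigma> * pmin\<^sup>2)"
proof -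
  define S where "S k = bregman u (thr obs 1) - bregman u (thr obs (Suc k))" for k
  have bounded: "0 \<le> bregman u (thr obs j) \<and> bregman u (thr obs j) \<le> bregman_bound" if "1 \<le> j" for j
    using bregman_nonneg bregman_le_bound[OF u abs_thr_le[OF that]] by blast
  have "\<bar>S k\<bar> \<le> bregman_bound" for k
    using bounded[of 1] bounded[of "Suc k"] unfolding S_def abs_le_iff by simp
  then have "\<bar>\<Sum>t=1..T. (S t - S (t-1)) / e t\<bar> \<le> 2 * bregman_bound / e T"
    by (intro summation_by_parts_bound[where e=e and T=T and S=S])
      (use e e_mono T in \<open>auto simp: S_def\<close>)
  moreover have "(\<Sum>t=1..T. (S t - S (t-1)) / e t)
      = (\<Sum>t=1..T. (bregman u (thr obs t) - bregman u (thr obs (Suc t))) / e t)"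
    by (intro sum.cong refl) (auto simp: S_def Suc_pred')
  moreover have "(\<Sum>t=1..T. (qloss \<alpha> (thr obs t) (rs t) - qloss \<alpha> u (rs t)) * (if obs t then 1 else 0) / p t)
      \<le> (\<Sum>t=1..T. (bregman u (thr obs t) - bregman u (thr obs (Suc t))) / e t + e t / (\<sigma> * pmin\<^sup>2))"
    by (intro sum_mono weighted_regret_step_le) auto
  ultimately show ?thesis
    by (simp add: sum.distrib sum_divide_distrib abs_le_iff)
qed


lemma thr_indep_current: "thr (obs(t := y)) t = thr obs t"
  unfolding thr_def by (rule imocp_cong_past) simp

lemma expectation_grad_est:
  assumes t: "t \<in> {1..T}"
  shows "measure_pmf.expectation (obs_pmf p T) (\<lambda>obs. grad_est obs t)
       = \<alpha> - measure_pmf.expectation (obs_pmf p T) (\<lambda>obs. miscov (thr obs t) (rs t))"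
proof -
  let ?E = "measure_pmf.expectation (obs_pmf p T)"
  let ?miss = "\<lambda>obs. miscov (thr obs t) (rs t)" and ?ind = "\<lambda>obs. if obs t then 1 else 0 :: real"
  have pt: "0 < p t" "p t \<le> 1" using p[of t] pmin by auto
  have "(\<lambda>obs. grad_est obs t) = (\<lambda>obs. (\<alpha> * ?ind obs - ?miss obs * ?ind obs) / p t)"
    by (auto simp: grad_est_def algebra_simps)
  then have "?E (\<lambda>obs. grad_est obs t) = (\<alpha> * ?E ?ind - ?E (\<lambda>obs. ?miss obs * ?ind obs)) / p t"
    by simp
  also have "\<dots> = (\<alpha> * p t - p t * ?E ?miss) / p t"
    using expectation_obs_indicator[OF t] expectation_obs_pmf_mult_indicator[OF t] pt
    by (simp add: thr_indep_current miscov_def)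
  also have "\<dots> = \<alpha> - ?E ?miss" using pt by (simp add: field_simps)
  finally show ?thesis .
qed

lemma exp_miscov_deviation_le:
  assumes T: "1 \<le> T" and e_mono: "\<And>t. 1 \<le> t \<Longrightarrow> t < T \<Longrightarrow> e (Suc t) \<le> e t"
  shows "\<bar>exp_miscov G \<alpha> r1 e p rs T - \<alpha>\<bar> \<le> 2 * (band_hi - band_lo) / (real T * e T)"
proof -
  let ?E = "measure_pmf.expectation (obs_pmf p T)"
  have "exp_miscov G \<alpha> r1 e p rs T = (\<Sum>t=1..T. ?E (\<lambda>obs. miscov (thr obs t) (rs t))) / real T"
    unfolding exp_miscov_def thr_def[symmetric] by (simp add: Bochner_Integration.integral_sum)
  also have "\<dots> = (\<Sum>t=1..T. \<alpha> - ?E (\<lambda>obs. grad_est obs t)) / real T"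
    by (simp add: expectation_grad_est)
  also have "\<dots> = \<alpha> - ?E (\<lambda>obs. \<Sum>t=1..T. grad_est obs t) / real T"
    using T by (simp add: Bochner_Integration.integral_sum sum_subtractf field_simps)
  finally have "\<bar>exp_miscov G \<alpha> r1 e p rs T - \<alpha>\<bar> = \<bar>?E (\<lambda>obs. \<Sum>t=1..T. grad_est obs t)\<bar> / real T"
    by simp
  also have "\<bar>?E (\<lambda>obs. \<Sum>t=1..T. grad_est obs t)\<bar> \<le> ?E (\<lambda>obs. \<bar>\<Sum>t=1..T. grad_est obs t\<bar>)"
    by (rule integral_abs_bound)
  also have "\<dots> \<le> ?E (\<lambda>_. 2 * (band_hi - band_lo) / e T)"
    by (intro integral_mono abs_sum_grad_est_le[OF T e_mono]) auto
  finally show ?thesis using T by (simp add: divide_right_mono field_simps)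
qed

lemma exp_regret_le:
  assumes T: "1 \<le> T" and e_mono: "\<And>t. 1 \<le> t \<Longrightarrow> t < T \<Longrightarrow> e (Suc t) \<le> e t"
  shows "exp_regret G \<alpha> r1 e p rs T \<le> 2 * bregman_bound / e T + (\<Sum>t=1..T. e t) / (\<sigma> * pmin\<^sup>2)"
proof -
  let ?E = "measure_pmf.expectation (obs_pmf p T)"
  let ?ind = "\<lambda>obs t. if obs t then 1 else 0 :: real"
  define K where "K = 2 * bregman_bound / e T + (\<Sum>t=1..T. e t) / (\<sigma> * pmin\<^sup>2)"
  define F where "F obs = (\<Sum>t\<in>{1..T}. qloss \<alpha> (thr obs t) (rs t) * ?ind obs t / p t)" for obs
  have comparator: "?E F - K \<le> (\<Sum>t\<in>{1..T}. qloss \<alpha> u (rs t))" if u: "0 \<le> u" "u \<le> B" for u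
  proof -
    have "B \<le> thr_bound" unfolding thr_bound_def by simp
    then have "\<bar>u\<bar> \<le> thr_bound" using u by simp
    define Fu where "Fu obs = (\<Sum>t\<in>{1..T}. qloss \<alpha> u (rs t) * ?ind obs t / p t)" for obs
    have "F obs - Fu obs \<le> K" for obs
      using \<open>\<bar>u\<bar> \<le> thr_bound\<close> weighted_regret_le[OF T e_mono, of u obs]
      by (simp add: F_def Fu_def K_def sum_subtractf[symmetric] left_diff_distrib diff_divide_distrib)
    then have "?E (\<lambda>obs. F obs - Fu obs) \<le> ?E (\<lambda>_. K)"
      by (intro integral_mono) auto
    then have "?E F - ?E Fu \<le> K" by simp
    moreover have "?E Fu = (\<Sum>t\<in>{1..T}. qloss \<alpha> u (rs t))"
      unfolding Fu_def using p pmin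
      by (intro expectation_inverse_propensity_sum) (auto intro: order.strict_trans2)
    ultimately show ?thesis by simp
  qed
  have "?E F - K \<le> (INF u. \<Sum>t\<in>{1..T}. qloss \<alpha> u (rs t))"
  proof (rule cINF_greatest)
    fix v
    have "?E F - K \<le> (\<Sum>t\<in>{1..T}. qloss \<alpha> (max 0 (min B v)) (rs t))"
      using B by (intro comparator) auto
    also have "\<dots> \<le> (\<Sum>t\<in>{1..T}. qloss \<alpha> v (rs t))"
      using alpha rs by (intro sum_mono qloss_clamp_le) auto
    finally show "?E F - K \<le> (\<Sum>t\<in>{1..T}. qloss \<alpha> v (rs t))" .
  qed simp
  then show ?thesis unfolding exp_regret_def thr_def[symmetric] F_def K_def by simp
qed


lemma miscov_rate:
  assumes T: "1 \<le> T" and e_mono: "\<And>t. 1 \<le> t \<Longrightarrow> t < T \<Longrightarrow> e (Suc t) \<le> e t"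
    and e_T: "e T = c * real T powr (-\<beta>)"
  shows "\<bar>exp_miscov G \<alpha> r1 e p rs T - \<alpha>\<bar> \<le> 2 * (band_hi - band_lo) / c * real T powr (-(1 - \<beta>))"
proof -
  have "real T powr (-(1 - \<beta>)) = 1 / (real T * real T powr (-\<beta>))"
    by (metis minus_real_def of_nat_0_le_iff powr_minus_divide powr_mult_base)
  then have "2 * (band_hi - band_lo) / (real T * e T) = 2 * (band_hi - band_lo) / c * real T powr (-(1 - \<beta>))"
    by (simp add: e_T ac_simps)
  then show ?thesis using exp_miscov_deviation_le[OF T e_mono] by simp
qed

lemma regret_rate:
  assumes T: "1 \<le> T" and e_mono: "\<And>t. 1 \<le> t \<Longrightarrow> t < T \<Longrightarrow> e (Suc t) \<le> e t"
    and e_T: "e T = c * real T powr (-\<beta>)"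
    and e_sum: "(\<Sum>t=1..T. e t) \<le> c * real T powr (1 - \<beta>) / (1 - \<beta>)"
    and beta: "0 < \<beta>" "\<beta> < 1"
  shows "exp_regret G \<alpha> r1 e p rs T
     \<le> (2 * bregman_bound / c + c / ((1 - \<beta>) * \<sigma> * pmin\<^sup>2)) * real T powr (max \<beta> (1 - \<beta>))"
proof -
  let ?m = "real T powr (max \<beta> (1 - \<beta>))"
  have "2 * bregman_bound / e T = 2 * bregman_bound / c * real T powr \<beta>"
    by (simp add: e_T powr_minus divide_inverse)
  also have "\<dots> \<le> 2 * bregman_bound / c * ?m"
    using T bregman_bound_nonneg c by (intro mult_left_mono powr_mono) auto
  finally have first: "2 * bregman_bound / e T \<le> 2 * bregman_bound / c * ?m" .
  have "(\<Sum>t=1..T. e t) / (\<sigma> * pmin\<^sup>2) \<le> c * real T powr (1 - \<beta>) / (1 - \<beta>) / (\<sigma> * pmin\<^sup>2)"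
    using e_sum sigma pmin by (intro divide_right_mono) auto
  also have "\<dots> = c / ((1 - \<beta>) * \<sigma> * pmin\<^sup>2) * real T powr (1 - \<beta>)" by simp
  also have "\<dots> \<le> c / ((1 - \<beta>) * \<sigma> * pmin\<^sup>2) * ?m"
    using T beta c sigma pmin by (intro mult_left_mono powr_mono) auto
  finally have second: "(\<Sum>t=1..T. e t) / (\<sigma> * pmin\<^sup>2) \<le> c / ((1 - \<beta>) * \<sigma> * pmin\<^sup>2) * ?m" .
  show ?thesis
    using exp_regret_le[OF T e_mono] first second by (simp add: distrib_right)
qed

end


theorem corollary1:
  fixes \<alpha> B \<sigma> pmin c \<beta> r1 :: real
    and rs p :: "nat \<Rightarrow> real"
    and f :: "real \<Rightarrow> real"
    and P :: "real measure"
    and \<eta> :: "nat \<Rightarrow> nat \<Rightarrow> real"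
  assumes alpha: "0 < \<alpha>" "\<alpha> < 1"
    and B: "0 < B"
    and rs: "\<And>t. 0 \<le> rs t \<and> rs t \<le> B"
    and dens_meas: "f \<in> borel_measurable borel"
    and dens_nonneg: "\<And>x. 0 \<le> f x"
    and dens_supp: "\<And>x. x \<notin> {0..B} \<Longrightarrow> f x = 0"
    and dens_bdd: "\<exists>M. \<forall>x. f x \<le> M"
    and P_def: "P = density lborel (\<lambda>x. ennreal (f x))"
    and P_prob: "prob_space P"
    and sigma: "0 < \<sigma>"
    and p: "\<And>t. pmin \<le> p t \<and> p t \<le> 1"
    and pmin: "0 < pmin"
    and r1: "0 \<le> r1" "r1 \<le> B"
    and c: "0 < c"
    and beta: "0 < \<beta>" "\<beta> < 1"
    and step: "\<eta> = (\<lambda>T t. c * real T powr (-\<beta>)) \<or> \<eta> = (\<lambda>T t. c * real t powr (-\<beta>))"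
  shows "\<exists>A C. \<forall>T\<ge>1.
      \<bar>exp_miscov (deriv (Rfun P \<alpha> \<sigma>)) \<alpha> r1 (\<eta> T) p rs T - \<alpha>\<bar> \<le> A * real T powr (-(1 - \<beta>))
    \<and> exp_regret (deriv (Rfun P \<alpha> \<sigma>)) \<alpha> r1 (\<eta> T) p rs T \<le> C * real T powr (max \<beta> (1 - \<beta>))"
proof -
  obtain M where M: "\<And>x. f x \<le> M" using dens_bdd by blast
  interpret D: bounded_density \<alpha> B \<sigma> M f P
    by (rule bounded_density.intro) (fact alpha B dens_meas dens_nonneg dens_supp M P_def P_prob sigma)+
  interpret S: imocp_setting D.Rgrad "Rfun P \<alpha> \<sigma>" \<alpha> \<sigma> B c pmin r1 p rs
    by unfold_locales
      (fact D.Rgrad_inv D.Rgrad_strongly_mono D.Rgrad_bounds D.Rfun_subgradient alpha sigma B rs p pmin r1 c)+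
  show ?thesis
  proof (intro exI allI impI)
    fix T :: nat assume T: "1 \<le> T"
    note sched = step_size_schedules[OF c beta T step]
    interpret R: imocp_run D.Rgrad "Rfun P \<alpha> \<sigma>" \<alpha> \<sigma> B c pmin r1 p rs "\<eta> T"
      by unfold_locales (rule sched(1))
    show "\<bar>exp_miscov (deriv (Rfun P \<alpha> \<sigma>)) \<alpha> r1 (\<eta> T) p rs T - \<alpha>\<bar>
        \<le> 2 * (S.band_hi - S.band_lo) / c * real T powr (-(1 - \<beta>))
      \<and> exp_regret (deriv (Rfun P \<alpha> \<sigma>)) \<alpha> r1 (\<eta> T) p rs T
        \<le> (2 * S.bregman_bound / c + c / ((1 - \<beta>) * \<sigma> * pmin\<^sup>2)) * real T powr (max \<beta> (1 - \<beta>))"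
      unfolding D.deriv_Rfun using R.miscov_rate R.regret_rate T sched beta by blast
  qed
qed

end
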